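(* Let $M\ge2$, observe $\mathbf y=\mathbf f+\boldsymbol\xi\in\mathbf R^n$ where $\xi_1,\dots,\xi_n$ are i.i.d. centered with variance $\sigma^2$, and for $j=1,\dots,M$ let $\hat{\boldsymbol\mu}_j=A_j\mathbf y+\mathbf b_j$ with deterministic $n\times n$ matrices $A_j$ and deterministic $\mathbf b_j\in\mathbf R^n$. Let $\hat{\boldsymbol\theta}_{\mathrm{pen}}\in\arg\min_{\boldsymbol\theta\in\Lambda^M}H_{\mathrm{pen}}(\boldsymbol\theta)$. Then almost surely \[\|\hat{\boldsymbol\mu}_{\hat{\boldsymbol\theta}_{\mathrm{pen}}}-\mathbf f\|_2^2\le\min_{q=1,\dots,M}\|\hat{\boldsymbol\mu}_q-\mathbf f\|_2^2+\max_{j,k=1,\dots,M}\Big(\Delta_{jk}-\tfrac12\|\hat{\boldsymbol\mu}_j-\hat{\boldsymbol\mu}_k\|_2^2\Big),\] where $\Delta_{jk}=2\boldsymbol\xi^T((A_j-A_k)\mathbf f+\mathbf b_j-\mathbf b_k)+2\big(\boldsymbol\xi^T(A_j-A_k)\boldsymbol\xi-\sigma^2\mathrm{Tr}(A_j-A_k)\big)$. Furthermore, for all $j,k=1,\dots,M$, \[\mathbb E\Big[\tfrac12\|\hat{\boldsymbol\mu}_j-\hat{\boldsymbol\mu}_k\|_2^2\Big]=\tfrac12\|(A_j-A_k)\mathbf f+\mathbf b_j-\mathbf b_k\|_2^2+\tfrac{\sigma^2}{2}\|A_j-A_k\|_F^2.\]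
   Context: $\Lambda^M=\{\boldsymbol\theta\in\mathbf R^M:\sum_j\theta_j=1,\theta_j\ge0\}$. For $\boldsymbol\theta\in\Lambda^M$: $A_{\boldsymbol\theta}=\sum_j\theta_jA_j$, $\mathbf b_{\boldsymbol\theta}=\sum_j\theta_j\mathbf b_j$, $\hat{\boldsymbol\mu}_{\boldsymbol\theta}=A_{\boldsymbol\theta}\mathbf y+\mathbf b_{\boldsymbol\theta}$. $C_p(\boldsymbol\theta)=\|\hat{\boldsymbol\mu}_{\boldsymbol\theta}\|_2^2-2\mathbf y^T\hat{\boldsymbol\mu}_{\boldsymbol\theta}+2\sigma^2\mathrm{Tr}(A_{\boldsymbol\theta})$, $\mathrm{pen}(\boldsymbol\theta)=\sum_j\theta_j\|\hat{\boldsymbol\mu}_{\boldsymbol\theta}-\hat{\boldsymbol\mu}_j\|_2^2$, $H_{\mathrm{pen}}=C_p+\tfrac12\mathrm{pen}$. $\|\cdot\|_F$ is the Frobenius norm. *)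

theory Defs
  imports "HOL-Analysis.Analysis" "HOL-Probability.Probability"
begin

text \<open>Weights are functions nat to real; the relevant coordinates are 1..M.\<close>
definition simplexM :: "nat \<Rightarrow> (nat \<Rightarrow> real) set" where
  "simplexM M = {\<theta>. (\<forall>j\<in>{1..M}. 0 \<le> \<theta> j) \<and> (\<Sum>j\<in>{1..M}. \<theta> j) = 1}"

definition Ath :: "nat \<Rightarrow> (nat \<Rightarrow> real^'n^'n) \<Rightarrow> (nat \<Rightarrow> real) \<Rightarrow> real^'n^'n" where
  "Ath M A \<theta> = (\<Sum>j\<in>{1..M}. \<theta> j *\<^sub>R A j)"

definition bth :: "nat \<Rightarrow> (nat \<Rightarrow> real^'n) \<Rightarrow> (nat \<Rightarrow> real) \<Rightarrow> real^'n" where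
  "bth M b \<theta> = (\<Sum>j\<in>{1..M}. \<theta> j *\<^sub>R b j)"

definition muj :: "(nat \<Rightarrow> real^'n^'n) \<Rightarrow> (nat \<Rightarrow> real^'n) \<Rightarrow> real^'n \<Rightarrow> nat \<Rightarrow> real^'n" where
  "muj A b y j = A j *v y + b j"

definition muth :: "nat \<Rightarrow> (nat \<Rightarrow> real^'n^'n) \<Rightarrow> (nat \<Rightarrow> real^'n) \<Rightarrow> real^'n \<Rightarrow> (nat \<Rightarrow> real) \<Rightarrow> real^'n" where
  "muth M A b y \<theta> = Ath M A \<theta> *v y + bth M b \<theta>"

definition Cp :: "nat \<Rightarrow> (nat \<Rightarrow> real^'n^'n) \<Rightarrow> (nat \<Rightarrow> real^'n) \<Rightarrow> real \<Rightarrow> real^'n \<Rightarrow> (nat \<Rightarrow> real) \<Rightarrow> real" where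
  "Cp M A b \<sigma> y \<theta> = (norm (muth M A b y \<theta>))\<^sup>2 - 2 * (y \<bullet> muth M A b y \<theta>)
      + 2 * \<sigma>\<^sup>2 * trace (Ath M A \<theta>)"

definition pen :: "nat \<Rightarrow> (nat \<Rightarrow> real^'n^'n) \<Rightarrow> (nat \<Rightarrow> real^'n) \<Rightarrow> real^'n \<Rightarrow> (nat \<Rightarrow> real) \<Rightarrow> real" where
  "pen M A b y \<theta> = (\<Sum>j\<in>{1..M}. \<theta> j * (norm (muth M A b y \<theta> - muj A b y j))\<^sup>2)"

definition Hpen :: "nat \<Rightarrow> (nat \<Rightarrow> real^'n^'n) \<Rightarrow> (nat \<Rightarrow> real^'n) \<Rightarrow> real \<Rightarrow> real^'n \<Rightarrow> (nat \<Rightarrow> real) \<Rightarrow> real" where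
  "Hpen M A b \<sigma> y \<theta> = Cp M A b \<sigma> y \<theta> + pen M A b y \<theta> / 2"

definition frob_norm :: "real^'n^'m \<Rightarrow> real" where
  "frob_norm X = sqrt (\<Sum>i\<in>UNIV. \<Sum>k\<in>UNIV. (X $ i $ k)\<^sup>2)"

definition Delta :: "(nat \<Rightarrow> real^'n^'n) \<Rightarrow> (nat \<Rightarrow> real^'n) \<Rightarrow> real \<Rightarrow> real^'n \<Rightarrow> real^'n \<Rightarrow> nat \<Rightarrow> nat \<Rightarrow> real" where
  "Delta A b \<sigma> f \<xi> j k =
     2 * (\<xi> \<bullet> ((A j - A k) *v f + b j - b k))
     + 2 * (\<xi> \<bullet> ((A j - A k) *v \<xi>) - \<sigma>\<^sup>2 * trace (A j - A k))"

end

theory Submission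
  imports Defs
begin

text \<open>
  On the simplex, the identity \<open>\<Sum>\<^sub>j \<theta>\<^sub>j \<parallel>\<mu>\<^sub>\<theta> - \<mu>\<^sub>j\<parallel>\<^sup>2 = \<Sum>\<^sub>j \<theta>\<^sub>j \<parallel>\<mu>\<^sub>j\<parallel>\<^sup>2 - \<parallel>\<mu>\<^sub>\<theta>\<parallel>\<^sup>2\<close>
  turns \<open>H\<^sub>p\<^sub>e\<^sub>n(\<theta>)\<close> into \<open>\<parallel>\<mu>\<^sub>\<theta>\<parallel>\<^sup>2/2\<close> plus a function linear in \<open>\<theta>\<close>.
  Moving the minimiser a step \<open>t\<close> towards the vertex \<open>e\<^sub>q\<close> therefore changes
  \<open>H\<^sub>p\<^sub>e\<^sub>n\<close> by \<open>t g + t\<^sup>2 \<parallel>\<mu>\<^sub>q - \<mu>\<^sub>\<theta>\<parallel>\<^sup>2/2\<close>, so minimality forces \<open>g \<ge> 0\<close>; with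
  \<open>y = f + \<xi>\<close>, the quantity \<open>g\<close> is exactly the slack in the oracle inequality against
  \<open>\<mu>\<^sub>q\<close>, whose remainder is a convex combination of the excess terms and hence at most
  their maximum. The expectation formula is the bias-variance decomposition of
  \<open>\<mu>\<^sub>j - \<mu>\<^sub>k = ((A\<^sub>j - A\<^sub>k) f + b\<^sub>j - b\<^sub>k) + (A\<^sub>j - A\<^sub>k) \<xi>\<close> for uncorrelated noise
  coordinates of variance \<open>\<sigma>\<^sup>2\<close>.
\<close>

lemma nonneg_if_nonneg_along_small_steps:
  fixes g a :: real
  assumes step: "\<And>t. 0 < t \<Longrightarrow> t \<le> 1 \<Longrightarrow> 0 \<le> t * g + t\<^sup>2 * a"
  shows "0 \<le> g"
proof (rule tendsto_lowerbound)
  show "((\<lambda>t. g + t * a) \<longlongrightarrow> g) (at_right 0)"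
    by (auto intro!: tendsto_eq_intros)
  have "0 \<le> g + t * a" if "0 < t" "t < 1" for t
  proof -
    have "0 \<le> t * (g + t * a)"
      using step[of t] that by (simp add: power2_eq_square algebra_simps)
    then show ?thesis using that by (simp add: zero_le_mult_iff)
  qed
  then show "\<forall>\<^sub>F t in at_right 0. 0 \<le> g + t * a"
    by (auto simp: eventually_at_right_field intro!: exI[of _ 1])
qed simp

lemma sum_weighted_sq_dist_eq:
  fixes m :: "'i \<Rightarrow> 'a::real_inner" and \<theta> :: "'i \<Rightarrow> real"
  assumes weights: "(\<Sum>j\<in>I. \<theta> j) = 1"
  defines "\<mu> \<equiv> \<Sum>j\<in>I. \<theta> j *\<^sub>R m j"
  shows "(\<Sum>j\<in>I. \<theta> j * (norm (x - m j))\<^sup>2)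
           = (norm (x - \<mu>))\<^sup>2 + (\<Sum>j\<in>I. \<theta> j * (norm (\<mu> - m j))\<^sup>2)"
proof -
  have expand: "(norm (x - m j))\<^sup>2
      = (norm (x - \<mu>))\<^sup>2 + 2 * ((x - \<mu>) \<bullet> (\<mu> - m j)) + (norm (\<mu> - m j))\<^sup>2" for j
    using dot_norm[of "x - \<mu>" "\<mu> - m j"] by simp
  have "(\<Sum>j\<in>I. \<theta> j * ((x - \<mu>) \<bullet> (\<mu> - m j))) = (x - \<mu>) \<bullet> (\<mu> - \<mu>)"
    by (simp add: \<mu>_def inner_diff_right inner_sum_right right_diff_distrib sum_subtractf
        flip: sum_distrib_right weights)
  then show ?thesis
    using weights
    by (simp add: expand distrib_left sum.distrib mult.left_commute[of _ 2]
        flip: sum_distrib_left sum_distrib_right)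
qed

lemma criterion_eq_half_norm_sq_plus_linear:
  fixes m :: "'i \<Rightarrow> 'a::real_inner" and \<theta> r :: "'i \<Rightarrow> real"
  assumes weights: "(\<Sum>j\<in>I. \<theta> j) = 1"
  defines "\<mu> \<equiv> \<Sum>j\<in>I. \<theta> j *\<^sub>R m j"
  shows "(norm \<mu>)\<^sup>2 - 2 * (y \<bullet> \<mu>) + (\<Sum>j\<in>I. \<theta> j * r j) + (\<Sum>j\<in>I. \<theta> j * (norm (\<mu> - m j))\<^sup>2) / 2
           = (norm \<mu>)\<^sup>2 / 2 + (\<Sum>j\<in>I. \<theta> j * (r j - 2 * (y \<bullet> m j) + (norm (m j))\<^sup>2 / 2))"
proof -
  have "(\<Sum>j\<in>I. \<theta> j * (r j - 2 * (y \<bullet> m j) + (norm (m j))\<^sup>2 / 2))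
      = (\<Sum>j\<in>I. \<theta> j * r j) - 2 * (y \<bullet> \<mu>) + (\<Sum>j\<in>I. \<theta> j * (norm (0 - m j))\<^sup>2) / 2"
    by (simp add: \<mu>_def inner_sum_right algebra_simps sum.distrib sum_subtractf sum_divide_distrib
        sum_distrib_left)
  then show ?thesis
    using sum_weighted_sq_dist_eq[OF weights, of 0 m] by (simp add: \<mu>_def add_divide_distrib)
qed

lemma simplexM_segment_to_vertex:
  assumes "\<theta> \<in> simplexM M" and "q \<in> {1..M}" and "0 \<le> t" and "t \<le> 1"
  shows "(\<lambda>j. (1 - t) * \<theta> j + t * of_bool (j = q)) \<in> simplexM M"
  using assms by (auto simp: simplexM_def sum.distrib of_bool_def
      simp flip: sum_distrib_left split: if_splits)

lemma simplexM_min_first_order: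
  fixes m :: "nat \<Rightarrow> 'a::real_inner" and c :: "nat \<Rightarrow> real" and M :: nat
  defines "\<mu> \<equiv> \<lambda>\<phi>. \<Sum>j\<in>{1..M}. \<phi> j *\<^sub>R m j"
  defines "G \<equiv> \<lambda>\<phi>. (norm (\<mu> \<phi>))\<^sup>2 / 2 + (\<Sum>j\<in>{1..M}. \<phi> j * c j)"
  assumes \<theta>: "\<theta> \<in> simplexM M" and q: "q \<in> {1..M}"
    and minimal: "\<forall>\<phi>\<in>simplexM M. G \<theta> \<le> G \<phi>"
  shows "0 \<le> \<mu> \<theta> \<bullet> (m q - \<mu> \<theta>) + c q - (\<Sum>j\<in>{1..M}. \<theta> j * c j)"
    (is "0 \<le> ?g")
proof (rule nonneg_if_nonneg_along_small_steps)
  fix t :: real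
  assume t: "0 < t" "t \<le> 1"
  define \<theta>t where "\<theta>t = (\<lambda>j. (1 - t) * \<theta> j + t * of_bool (j = q))"
  define v where "v = m q - \<mu> \<theta>"
  have "(\<Sum>j\<in>{1..M}. of_bool (j = q) *\<^sub>R m j) = m q"
    using q by (simp add: of_bool_def if_distrib[of "\<lambda>x. x *\<^sub>R _"] cong: if_cong)
  moreover have "\<mu> \<theta>t = (1 - t) *\<^sub>R \<mu> \<theta> + t *\<^sub>R (\<Sum>j\<in>{1..M}. of_bool (j = q) *\<^sub>R m j)"
    by (simp add: \<mu>_def \<theta>t_def sum.distrib scaleR_add_left scaleR_sum_right)
  ultimately have "\<mu> \<theta>t = \<mu> \<theta> + t *\<^sub>R v"
    by (simp add: v_def algebra_simps)
  then have norm_\<mu>\<theta>t: "(norm (\<mu> \<theta>t))\<^sup>2 = (norm (\<mu> \<theta>))\<^sup>2 + 2 * t * (\<mu> \<theta> \<bullet> v) + t\<^sup>2 * (norm v)\<^sup>2"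
    unfolding power2_norm_eq_inner
    by (simp add: inner_add_left inner_add_right inner_commute algebra_simps power2_eq_square)
  have "(\<Sum>j\<in>{1..M}. of_bool (j = q) * c j) = c q"
    using q by simp
  moreover have "(\<Sum>j\<in>{1..M}. \<theta>t j * c j)
      = (1 - t) * (\<Sum>j\<in>{1..M}. \<theta> j * c j) + t * (\<Sum>j\<in>{1..M}. of_bool (j = q) * c j)"
    by (simp add: \<theta>t_def sum.distrib distrib_right sum_distrib_left mult.assoc
        del: sum_of_bool_mult_eq)
  ultimately have "G \<theta>t = G \<theta> + (t * ?g + t\<^sup>2 * ((norm v)\<^sup>2 / 2))"
    by (simp add: G_def norm_\<mu>\<theta>t algebra_simps add_divide_distrib flip: v_def)
  moreover have "G \<theta> \<le> G \<theta>t"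
    using minimal simplexM_segment_to_vertex[OF \<theta> q, of t] t by (simp add: \<theta>t_def)
  ultimately show "0 \<le> t * ?g + t\<^sup>2 * ((norm v)\<^sup>2 / 2)"
    by linarith
qed

lemma simplexM_min_oracle_inequality:
  fixes m :: "nat \<Rightarrow> 'a::real_inner" and r :: "nat \<Rightarrow> real" and f \<xi> :: 'a and M :: nat
  defines "\<mu> \<equiv> \<lambda>\<phi>. \<Sum>j\<in>{1..M}. \<phi> j *\<^sub>R m j"
  defines "G \<equiv> \<lambda>\<phi>. (norm (\<mu> \<phi>))\<^sup>2 - 2 * ((f + \<xi>) \<bullet> \<mu> \<phi>) + (\<Sum>j\<in>{1..M}. \<phi> j * r j)
                   + (\<Sum>j\<in>{1..M}. \<phi> j * (norm (\<mu> \<phi> - m j))\<^sup>2) / 2"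
  assumes \<theta>: "\<theta> \<in> simplexM M" and q: "q \<in> {1..M}"
    and minimal: "\<forall>\<phi>\<in>simplexM M. G \<theta> \<le> G \<phi>"
  shows "(norm (\<mu> \<theta> - f))\<^sup>2 \<le> (norm (m q - f))\<^sup>2
           + (\<Sum>j\<in>{1..M}. \<theta> j * (2 * (\<xi> \<bullet> (m j - m q)) - (r j - r q) - (norm (m j - m q))\<^sup>2 / 2))"
proof -
  define c where "c j = r j - 2 * ((f + \<xi>) \<bullet> m j) + (norm (m j))\<^sup>2 / 2" for j
  define C where "C = (\<Sum>j\<in>{1..M}. \<theta> j * c j)"
  define R where "R = (\<Sum>j\<in>{1..M}. \<theta> j * r j)"
  define P where "P = (\<Sum>j\<in>{1..M}. \<theta> j * (norm (\<mu> \<theta> - m j))\<^sup>2)"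
  have sum1: "(\<Sum>j\<in>{1..M}. \<theta> j) = 1"
    using \<theta> by (simp add: simplexM_def)
  have G_quadratic: "G \<phi> = (norm (\<mu> \<phi>))\<^sup>2 / 2 + (\<Sum>j\<in>{1..M}. \<phi> j * c j)"
    if "\<phi> \<in> simplexM M" for \<phi>
    using that unfolding G_def \<mu>_def c_def
    by (simp add: simplexM_def criterion_eq_half_norm_sq_plus_linear)
  have "0 \<le> \<mu> \<theta> \<bullet> (m q - \<mu> \<theta>) + c q - C"
    using simplexM_min_first_order[OF \<theta> q, of m c] minimal \<theta>
    by (simp add: G_quadratic \<mu>_def C_def)
  moreover have "C = (norm (\<mu> \<theta>))\<^sup>2 / 2 - 2 * ((f + \<xi>) \<bullet> \<mu> \<theta>) + R + P / 2"
    using G_quadratic[OF \<theta>] by (simp add: G_def C_def R_def P_def)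
  moreover have "(\<Sum>j\<in>{1..M}. \<theta> j * (2 * (\<xi> \<bullet> (m j - m q)) - (r j - r q) - (norm (m j - m q))\<^sup>2 / 2))
      = 2 * (\<xi> \<bullet> \<mu> \<theta>) - 2 * (\<xi> \<bullet> m q) * (\<Sum>j\<in>{1..M}. \<theta> j) - R
        + r q * (\<Sum>j\<in>{1..M}. \<theta> j) - (\<Sum>j\<in>{1..M}. \<theta> j * (norm (m q - m j))\<^sup>2) / 2"
    by (simp add: \<mu>_def R_def inner_sum_right algebra_simps sum.distrib sum_subtractf
        sum_divide_distrib sum_distrib_left sum_distrib_right norm_minus_commute)
  moreover have "(\<Sum>j\<in>{1..M}. \<theta> j * (norm (m q - m j))\<^sup>2) = (norm (m q - \<mu> \<theta>))\<^sup>2 + P"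
    unfolding P_def \<mu>_def by (rule sum_weighted_sq_dist_eq[OF sum1])
  ultimately show ?thesis
    unfolding sum1 c_def power2_norm_eq_inner
    by (simp add: inner_diff_left inner_diff_right inner_add_left inner_commute algebra_simps
        add_divide_distrib diff_divide_distrib)
qed

lemma matrix_vector_mult_sum_left:
  "finite I \<Longrightarrow> (\<Sum>i\<in>I. X i) *v x = (\<Sum>i\<in>I. X i *v x)"
  by (induct rule: finite_induct) (auto simp: matrix_vector_mult_add_rdistrib)

lemma muth_eq_sum_muj: "muth M A b y \<theta> = (\<Sum>j\<in>{1..M}. \<theta> j *\<^sub>R muj A b y j)"
  unfolding muth_def Ath_def bth_def muj_def
  by (simp add: matrix_vector_mult_sum_left scaleR_add_right sum.distrib
      flip: scaleR_matrix_vector_assoc)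

lemma trace_Ath: "trace (Ath M A \<theta>) = (\<Sum>j\<in>{1..M}. \<theta> j * trace (A j))"
  unfolding Ath_def trace_def by (simp add: sum_distrib_left sum.swap[of _ UNIV])

lemma Hpen_eq_sum_trace:
  "Hpen M A b \<sigma> y \<theta> = (norm (muth M A b y \<theta>))\<^sup>2 - 2 * (y \<bullet> muth M A b y \<theta>)
     + (\<Sum>j\<in>{1..M}. \<theta> j * (2 * \<sigma>\<^sup>2 * trace (A j)))
     + (\<Sum>j\<in>{1..M}. \<theta> j * (norm (muth M A b y \<theta> - muj A b y j))\<^sup>2) / 2"
  unfolding Hpen_def Cp_def pen_def trace_Ath
  by (simp add: sum_distrib_left mult.left_commute)

lemma muj_diff:
  "muj A b (f + \<xi>) j - muj A b (f + \<xi>) k = ((A j - A k) *v f + b j - b k) + (A j - A k) *v \<xi>"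
  unfolding muj_def by (simp add: matrix_vector_mult_diff_rdistrib matrix_vector_right_distrib algebra_simps)

lemma Hpen_argmin_oracle_inequality:
  fixes f \<xi> :: "real^'n"
  assumes M: "M \<ge> 1" and \<theta>: "\<theta> \<in> simplexM M"
    and minimal: "\<forall>\<phi>\<in>simplexM M. Hpen M A b \<sigma> (f + \<xi>) \<theta> \<le> Hpen M A b \<sigma> (f + \<xi>) \<phi>"
  shows "(norm (muth M A b (f + \<xi>) \<theta> - f))\<^sup>2
            \<le> (MIN q\<in>{1..M}. (norm (muj A b (f + \<xi>) q - f))\<^sup>2)
              + Max ((\<lambda>(j, k). Delta A b \<sigma> f \<xi> j k
                        - (norm (muj A b (f + \<xi>) j - muj A b (f + \<xi>) k))\<^sup>2 / 2)
                     ` ({1..M} \<times> {1..M}))"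
proof -
  let ?m = "muj A b (f + \<xi>)"
  let ?excess = "\<lambda>(j, k). Delta A b \<sigma> f \<xi> j k - (norm (?m j - ?m k))\<^sup>2 / 2"
  obtain q where q: "q \<in> {1..M}"
    and q_min: "(norm (?m q - f))\<^sup>2 = (MIN q\<in>{1..M}. (norm (?m q - f))\<^sup>2)"
    using M Min_in[of "(\<lambda>q. (norm (?m q - f))\<^sup>2) ` {1..M}"] by fastforce
  have excess_eq: "2 * (\<xi> \<bullet> (?m j - ?m q)) - (2 * \<sigma>\<^sup>2 * trace (A j) - 2 * \<sigma>\<^sup>2 * trace (A q))
      - (norm (?m j - ?m q))\<^sup>2 / 2 = ?excess (j, q)" for j
    unfolding Delta_def muj_diff trace_sub by (simp add: inner_add_right algebra_simps)
  have "(norm (muth M A b (f + \<xi>) \<theta> - f))\<^sup>2 \<le> (norm (?m q - f))\<^sup>2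
      + (\<Sum>j\<in>{1..M}. \<theta> j * ?excess (j, q))"
    unfolding muth_eq_sum_muj excess_eq[symmetric]
    by (rule simplexM_min_oracle_inequality[OF \<theta> q])
      (use minimal in \<open>simp add: Hpen_eq_sum_trace muth_eq_sum_muj\<close>)
  also have "(\<Sum>j\<in>{1..M}. \<theta> j * ?excess (j, q)) \<le> (\<Sum>j\<in>{1..M}. \<theta> j * Max (?excess ` ({1..M} \<times> {1..M})))"
    using \<theta> q by (intro sum_mono mult_left_mono Max_ge) (auto simp: simplexM_def)
  also have "\<dots> = Max (?excess ` ({1..M} \<times> {1..M}))"
    using \<theta> by (simp add: simplexM_def flip: sum_distrib_right)
  finally show ?thesis
    unfolding q_min by simp
qed

lemma inner_matrix_vector_mult:
  fixes D :: "real^'n^'m" and u :: "real^'m" and x :: "real^'n"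
  shows "u \<bullet> (D *v x) = (\<Sum>l\<in>UNIV. (\<Sum>i\<in>UNIV. u$i * D$i$l) * x$l)"
proof -
  have "u \<bullet> (D *v x) = (\<Sum>i\<in>UNIV. \<Sum>l\<in>UNIV. u$i * D$i$l * x$l)"
    by (simp add: inner_vec_def matrix_vector_mult_def sum_distrib_left mult.assoc)
  also have "\<dots> = (\<Sum>l\<in>UNIV. \<Sum>i\<in>UNIV. u$i * D$i$l * x$l)"
    by (rule sum.swap)
  finally show ?thesis
    by (simp add: sum_distrib_right)
qed

lemma norm_sq_matrix_vector_mult:
  fixes D :: "real^'n^'m" and x :: "real^'n"
  shows "(norm (D *v x))\<^sup>2 = (\<Sum>l\<in>UNIV. \<Sum>k\<in>UNIV. (\<Sum>i\<in>UNIV. D$i$l * D$i$k) * (x$l * x$k))"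
proof -
  have "(norm (D *v x))\<^sup>2 = (\<Sum>i\<in>UNIV. \<Sum>l\<in>UNIV. \<Sum>k\<in>UNIV. D$i$l * D$i$k * (x$l * x$k))"
    by (simp add: power2_norm_eq_inner inner_vec_def matrix_vector_mult_def sum_product
        mult.commute mult.left_commute)
  also have "\<dots> = (\<Sum>l\<in>UNIV. \<Sum>i\<in>UNIV. \<Sum>k\<in>UNIV. D$i$l * D$i$k * (x$l * x$k))"
    by (rule sum.swap)
  also have "\<dots> = (\<Sum>l\<in>UNIV. \<Sum>k\<in>UNIV. \<Sum>i\<in>UNIV. D$i$l * D$i$k * (x$l * x$k))"
    by (intro sum.cong refl sum.swap)
  finally show ?thesis
    by (simp add: sum_distrib_right)
qed

lemma norm_sq_add_matrix_vector_mult: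
  fixes D :: "real^'n^'m" and u :: "real^'m" and x :: "real^'n"
  shows "(norm (u + D *v x))\<^sup>2 = (norm u)\<^sup>2 + 2 * (\<Sum>l\<in>UNIV. (\<Sum>i\<in>UNIV. u$i * D$i$l) * x$l)
           + (\<Sum>l\<in>UNIV. \<Sum>k\<in>UNIV. (\<Sum>i\<in>UNIV. D$i$l * D$i$k) * (x$l * x$k))"
  unfolding norm_sq_matrix_vector_mult[symmetric] inner_matrix_vector_mult[symmetric]
  by (simp add: power2_norm_eq_inner inner_add_left inner_add_right inner_commute)

context prob_space
begin

lemma expectation_mult_indep_centered:
  fixes X :: "'i \<Rightarrow> 'a \<Rightarrow> real"
  assumes meas: "\<And>i. X i \<in> borel_measurable M"
    and indep: "indep_vars (\<lambda>_. borel) X UNIV"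
    and sqint: "\<And>i. integrable M (\<lambda>w. (X i w)\<^sup>2)"
    and centered: "\<And>i. expectation (X i) = 0"
    and var: "\<And>i. variance (X i) = \<sigma>\<^sup>2"
  shows "integrable M (\<lambda>w. X l w * X k w)"
    and "expectation (\<lambda>w. X l w * X k w) = (if l = k then \<sigma>\<^sup>2 else 0)"
proof -
  have pair: "indep_vars (\<lambda>_. borel) X {l, k}"
    using indep by (rule indep_vars_subset) simp
  show "integrable M (\<lambda>w. X l w * X k w)"
  proof (cases "l = k")
    case True
    then show ?thesis using sqint[of l] by (simp add: power2_eq_square)
  next
    case False
    have "integrable M (\<lambda>w. \<Prod>i\<in>{l, k}. X i w)"
      using pair meas square_integrable_imp_integrable[OF meas sqint]
      by (intro indep_vars_integrable) auto
    then show ?thesis using False by simp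
  qed
  show "expectation (\<lambda>w. X l w * X k w) = (if l = k then \<sigma>\<^sup>2 else 0)"
  proof (cases "l = k")
    case True
    then show ?thesis using var[of l] centered[of l] by (simp add: power2_eq_square)
  next
    case False
    have "expectation (\<lambda>w. \<Prod>i\<in>{l, k}. X i w) = (\<Prod>i\<in>{l, k}. expectation (X i))"
      using pair meas square_integrable_imp_integrable[OF meas sqint]
      by (intro indep_vars_lebesgue_integral) auto
    then show ?thesis using False centered by simp
  qed
qed

lemma expectation_norm_sq_affine_noise:
  fixes \<xi> :: "'a \<Rightarrow> real^'n" and D :: "real^'n^'m" and u :: "real^'m"
  assumes meas: "\<And>i. (\<lambda>w. \<xi> w $ i) \<in> borel_measurable M"
    and indep: "indep_vars (\<lambda>_. borel) (\<lambda>i w. \<xi> w $ i) UNIV"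
    and sqint: "\<And>i. integrable M (\<lambda>w. (\<xi> w $ i)\<^sup>2)"
    and centered: "\<And>i. expectation (\<lambda>w. \<xi> w $ i) = 0"
    and var: "\<And>i. variance (\<lambda>w. \<xi> w $ i) = \<sigma>\<^sup>2"
  shows "expectation (\<lambda>w. (norm (u + D *v \<xi> w))\<^sup>2) = (norm u)\<^sup>2 + \<sigma>\<^sup>2 * (frob_norm D)\<^sup>2"
proof -
  note second_moments = expectation_mult_indep_centered[of "\<lambda>i w. \<xi> w $ i", OF meas indep sqint
      centered var]
  have "integrable M (\<lambda>w. \<xi> w $ l)" for l
    by (rule square_integrable_imp_integrable[OF meas sqint])
  then have "expectation (\<lambda>w. (norm (u + D *v \<xi> w))\<^sup>2)
      = (norm u)\<^sup>2 + (\<Sum>l\<in>UNIV. \<Sum>k\<in>UNIV. (\<Sum>i\<in>UNIV. D$i$l * D$i$k) * (if l = k then \<sigma>\<^sup>2 else 0))"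
    unfolding norm_sq_add_matrix_vector_mult
    by (simp add: integral_add integral_mult_right integral_sum integrable_sum integrable_add
        integrable_mult_right second_moments centered prob_space del: mult_if_delta)
  also have "\<dots> = (norm u)\<^sup>2 + \<sigma>\<^sup>2 * (\<Sum>l\<in>UNIV. \<Sum>i\<in>UNIV. (D$i$l)\<^sup>2)"
  proof -
    have "(\<Sum>k\<in>UNIV. (\<Sum>i\<in>UNIV. D$i$l * D$i$k) * (if l = k then \<sigma>\<^sup>2 else 0))
        = (\<Sum>i\<in>UNIV. (D$i$l)\<^sup>2) * \<sigma>\<^sup>2" for l
      by (simp add: if_distrib[of "\<lambda>z. _ * z"] power2_eq_square cong: if_cong)
    then show ?thesis
      by (simp add: sum_distrib_left mult.commute)
  qed
  also have "(\<Sum>l\<in>UNIV. \<Sum>i\<in>UNIV. (D$i$l)\<^sup>2) = (frob_norm D)\<^sup>2"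
    unfolding frob_norm_def by (subst sum.swap) (simp add: sum_nonneg)
  finally show ?thesis .
qed

end

theorem proposition3p3:
  fixes P :: "'w measure"
    and \<xi> :: "'w \<Rightarrow> real^'n"
    and f :: "real^'n"
    and \<sigma> :: real
    and M :: nat
    and A :: "nat \<Rightarrow> real^'n^'n"
    and b :: "nat \<Rightarrow> real^'n"
    and \<theta>hat :: "'w \<Rightarrow> (nat \<Rightarrow> real)"
  assumes P: "prob_space P"
    and M2: "M \<ge> 2"
    and meas: "\<And>i. (\<lambda>w. \<xi> w $ i) \<in> borel_measurable P"
    and indep: "prob_space.indep_vars P (\<lambda>_. borel) (\<lambda>i w. \<xi> w $ i) UNIV"
    and ident: "\<And>i i'. distr P borel (\<lambda>w. \<xi> w $ i) = distr P borel (\<lambda>w. \<xi> w $ i')"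
    and sqint: "\<And>i. integrable P (\<lambda>w. (\<xi> w $ i)\<^sup>2)"
    and centered: "\<And>i. prob_space.expectation P (\<lambda>w. \<xi> w $ i) = 0"
    and var: "\<And>i. prob_space.variance P (\<lambda>w. \<xi> w $ i) = \<sigma>\<^sup>2"
    and argmin: "\<And>w. w \<in> space P \<Longrightarrow> \<theta>hat w \<in> simplexM M \<and>
        (\<forall>\<theta>\<in>simplexM M. Hpen M A b \<sigma> (f + \<xi> w) (\<theta>hat w) \<le> Hpen M A b \<sigma> (f + \<xi> w) \<theta>)"
  shows "(AE w in P.
            (norm (muth M A b (f + \<xi> w) (\<theta>hat w) - f))\<^sup>2
            \<le> (MIN q\<in>{1..M}. (norm (muj A b (f + \<xi> w) q - f))\<^sup>2)
              + Max ((\<lambda>(j, k). Delta A b \<sigma> f (\<xi> w) j k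
                        - (norm (muj A b (f + \<xi> w) j - muj A b (f + \<xi> w) k))\<^sup>2 / 2)
                     ` ({1..M} \<times> {1..M})))
       \<and> (\<forall>j\<in>{1..M}. \<forall>k\<in>{1..M}.
            prob_space.expectation P
              (\<lambda>w. (norm (muj A b (f + \<xi> w) j - muj A b (f + \<xi> w) k))\<^sup>2 / 2)
            = (norm ((A j - A k) *v f + b j - b k))\<^sup>2 / 2
              + \<sigma>\<^sup>2 / 2 * (frob_norm (A j - A k))\<^sup>2)"
proof -
  interpret prob_space P by (rule P)
  have expectation_half_sq_dist:
    "expectation (\<lambda>w. (norm (muj A b (f + \<xi> w) j - muj A b (f + \<xi> w) k))\<^sup>2 / 2)
      = (norm ((A j - A k) *v f + b j - b k))\<^sup>2 / 2 + \<sigma>\<^sup>2 / 2 * (frob_norm (A j - A k))\<^sup>2" for j k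
    unfolding muj_diff
    using expectation_norm_sq_affine_noise[OF meas indep sqint centered var,
        of "(A j - A k) *v f + b j - b k" "A j - A k"]
    by (simp add: add_divide_distrib)
  show ?thesis
    using argmin M2
    by (intro conjI AE_I2 ballI Hpen_argmin_oracle_inequality expectation_half_sq_dist) auto
qed

end
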